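(* Let $n=36$ and let $\mathcal{D}_{S_1},\mathcal{D}_{S_2}\subseteq\mathcal{D}_{[36]}\setminus\{36\}$ with $12\in\mathcal{D}_{S_1}\cap\mathcal{D}_{S_2}$. If $\mathrm{Spec}(\mathrm{ICG}(36,\mathcal{D}_{S_1}))=\mathrm{Spec}(\mathrm{ICG}(36,\mathcal{D}_{S_2}))$, then $\mathcal{D}_{S_1}=\mathcal{D}_{S_2}$.
   Context: Identify $\mathbb{Z}_n$ with $[n]=\{1,\dots,n\}$. For a divisor $d$ of $n$, $G_n(d)=\{j\in[n]:\gcd(j,n)=d\}$; $\mathcal{D}_{[n]}$ is the set of positive divisors of $n$. For $\mathcal{D}\subseteq\mathcal{D}_{[n]}\setminus\{n\}$, $\mathrm{ICG}(n,\mathcal{D})=\mathrm{Cay}(\mathbb{Z}_n,S)$ with $S=\bigcup_{d\in\mathcal{D}}G_n(d)$, and $\mathcal{D}=\mathcal{D}_S$. $\mathrm{Spec}$ is the multiset of adjacency eigenvalues. *)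

theory Defs
  imports "Jordan_Normal_Form.Char_Poly" "HOL-Computational_Algebra.Fundamental_Theorem_Algebra"
begin

text \<open>Z_n is identified with [n] = {1..n}; n represents the residue 0.\<close>

definition Gn :: "nat \<Rightarrow> nat \<Rightarrow> nat set" where
  "Gn n d = {j \<in> {1..n}. gcd j n = d}"

definition divisors_of :: "nat \<Rightarrow> nat set" where
  "divisors_of n = {d. 0 < d \<and> d dvd n}"

definition conn_set :: "nat \<Rightarrow> nat set \<Rightarrow> nat set" where
  "conn_set n D = (\<Union>d\<in>D. Gn n d)"

text \<open>Adjacency matrix of Cay(Z_n, S): row/column index i (0 \<le> i < n) stands for the
  vertex i+1 of [n]; vertices u, v are adjacent iff v - u is congruent mod n to an element of S.\<close>
definition cayley_adj :: "nat \<Rightarrow> nat set \<Rightarrow> complex mat" where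
  "cayley_adj n S = mat n n (\<lambda>(i, j).
      if (\<exists>s\<in>S. (int j - int i) mod int n = int s mod int n) then 1 else 0)"

definition ICG_adj :: "nat \<Rightarrow> nat set \<Rightarrow> complex mat" where
  "ICG_adj n D = cayley_adj n (conn_set n D)"

definition Spec :: "complex mat \<Rightarrow> complex multiset" where
  "Spec A = proots (char_poly A)"

end

theory Submission
  imports Defs
begin

text \<open>The adjacency matrix of \<open>Cay(\<int>\<^sub>n, S)\<close> is circulant, hence diagonalised by the discrete
  Fourier transform: its eigenvalues are the values \<open>dft n a k\<close> of the indicator \<open>a\<close> of \<open>S\<close>.
  By the convolution theorem, \<open>\<Sum>\<^sub>k (dft n a k)\<^sup>m\<close> is \<open>n\<close> times the \<open>m\<close>-fold cyclic
  self-convolution of \<open>a\<close> at \<open>0\<close>, i.e. \<open>n\<close> times the number of closed walks of length \<open>m\<close>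
  through a vertex; so cospectral Cayley graphs have the same closed walk counts.
  For \<open>n = 36\<close> the counts for lengths 2, 3 and 4 already separate the 128 admissible
  divisor sets containing 12, which is checked by evaluation.\<close>

section \<open>The discrete Fourier transform on \<open>\<int>\<^sub>n\<close>\<close>

definition unity_root :: "nat \<Rightarrow> complex" where
  "unity_root n = cis (2 * pi / n)"

lemma unity_root_pow_self [simp]: "unity_root n ^ n = 1"
  by (cases "n = 0") (simp_all add: unity_root_def DeMoivre)

lemma unity_root_pow_mod [simp]: "unity_root n ^ (a mod n) = unity_root n ^ a"
proof -
  have "unity_root n ^ a = unity_root n ^ (n * (a div n) + a mod n)"
    by simp
  also have "\<dots> = (unity_root n ^ n) ^ (a div n) * unity_root n ^ (a mod n)"
    by (simp only: power_add power_mult)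
  finally show ?thesis
    by simp
qed

lemma unity_root_pow_eq_1_iff:
  assumes "n > 0"
  shows "unity_root n ^ a = 1 \<longleftrightarrow> n dvd a"
proof
  assume "n dvd a"
  then show "unity_root n ^ a = 1"
    using unity_root_pow_mod[of n a] by simp
next
  assume "unity_root n ^ a = 1"
  then have "cos (2 * pi * real a / real n) = 1"
    unfolding unity_root_def DeMoivre by (simp add: complex_eq_iff ac_simps)
  then obtain k :: int where "2 * pi * real a / real n = real_of_int k * 2 * pi"
    using cos_one_2pi_int by blast
  then have "real a = real n * k"
    using assms by (simp add: field_simps)
  then have "int a = int n * k"
    by (metis of_int_eq_iff of_int_mult of_int_of_nat_eq)
  then show "n dvd a"
    by (metis dvd_triv_left int_dvd_int_iff)
qed

lemma sum_unity_root_powers: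
  assumes "n > 0"
  shows "(\<Sum>k<n. unity_root n ^ (t * k)) = (if n dvd t then of_nat n else 0)"
proof (cases "n dvd t")
  case True
  then have "unity_root n ^ (t * k) = 1" for k
    using unity_root_pow_eq_1_iff[OF assms] by simp
  then show ?thesis
    using True by simp
next
  case False
  let ?z = "unity_root n ^ t"
  have "?z \<noteq> 1"
    using False unity_root_pow_eq_1_iff[OF assms] by simp
  moreover have "?z ^ n = 1"
    by (metis mult.commute power_mult power_one unity_root_pow_self)
  ultimately have "(\<Sum>k<n. ?z ^ k) = 0"
    by (simp add: sum_gp_strict)
  then show ?thesis
    using False by (simp add: power_mult)
qed

lemma sum_lessThan_cyclic_shift:
  fixes n j :: nat
  assumes "j \<le> n"
  shows "(\<Sum>t<n. f ((t + n - j) mod n) t) = (\<Sum>l<n. f l ((l + j) mod n))"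
proof (rule sum.reindex_bij_witness[of _ "\<lambda>l. (l + j) mod n" "\<lambda>t. (t + n - j) mod n"])
  fix t assume "t \<in> {..<n}"
  then show "((t + n - j) mod n + j) mod n = t"
    using assms by (simp add: mod_add_left_eq)
  then show "f ((t + n - j) mod n) (((t + n - j) mod n + j) mod n) = f ((t + n - j) mod n) t"
    by simp
  show "(t + n - j) mod n \<in> {..<n}"
    using \<open>t \<in> {..<n}\<close> by simp
next
  fix l assume "l \<in> {..<n}"
  have "((l + j) mod n + (n - j)) mod n = (l + j + (n - j)) mod n"
    by (rule mod_add_left_eq)
  also have "\<dots> = l"
    using \<open>l \<in> {..<n}\<close> assms by simp
  finally show "((l + j) mod n + n - j) mod n = l"
    using assms by (metis add_diff_assoc)
  show "(l + j) mod n \<in> {..<n}"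
    using \<open>l \<in> {..<n}\<close> by simp
qed

definition dft :: "nat \<Rightarrow> (nat \<Rightarrow> complex) \<Rightarrow> nat \<Rightarrow> complex" where
  "dft n x k = (\<Sum>j<n. x j * unity_root n ^ (j * k))"

text \<open>For indices \<open>j < n\<close>, \<open>t + n - j\<close> stands for \<open>t - j\<close> without truncated subtraction.\<close>

definition cyclic_conv :: "nat \<Rightarrow> (nat \<Rightarrow> 'a::comm_semiring_0) \<Rightarrow> (nat \<Rightarrow> 'a) \<Rightarrow> nat \<Rightarrow> 'a" where
  "cyclic_conv n x y t = (\<Sum>j<n. x j * y ((t + n - j) mod n))"

lemma cyclic_conv_cong:
  assumes "\<And>j. j < n \<Longrightarrow> x j = x' j" and "\<And>j. j < n \<Longrightarrow> y j = y' j"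
  shows "cyclic_conv n x y t = cyclic_conv n x' y' t"
  unfolding cyclic_conv_def using assms by (intro sum.cong) simp_all

lemma of_int_cyclic_conv:
  "of_int (cyclic_conv n x y t) = cyclic_conv n (\<lambda>j. of_int (x j)) (\<lambda>j. of_int (y j)) t"
  by (simp add: cyclic_conv_def)

lemma dft_cyclic_conv:
  "dft n (cyclic_conv n x y) k = dft n x k * dft n y k"
proof -
  have shift: "(\<Sum>l<n. y l * unity_root n ^ ((l + j) * k)) =
      (\<Sum>t<n. y ((t + n - j) mod n) * unity_root n ^ (t * k))" if "j < n" for j
    using sum_lessThan_cyclic_shift[of j n "\<lambda>a b. y a * unity_root n ^ (b * k)"] that
    by (simp add: power_mult)
  have "dft n x k * dft n y k = (\<Sum>j<n. x j * unity_root n ^ (j * k) * dft n y k)"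
    unfolding dft_def[of n x] sum_distrib_right ..
  also have "\<dots> = (\<Sum>j<n. x j * (\<Sum>l<n. y l * unity_root n ^ ((l + j) * k)))"
    unfolding dft_def sum_distrib_left
    by (intro sum.cong refl) (simp add: power_add algebra_simps)
  also have "\<dots> = (\<Sum>j<n. x j * (\<Sum>t<n. y ((t + n - j) mod n) * unity_root n ^ (t * k)))"
    by (intro sum.cong refl) (simp add: shift)
  also have "\<dots> = dft n (cyclic_conv n x y) k"
    unfolding dft_def cyclic_conv_def sum_distrib_left sum_distrib_right
    by (subst sum.swap) (simp add: mult.assoc)
  finally show ?thesis ..
qed

lemma sum_dft:
  assumes "n > 0"
  shows "(\<Sum>k<n. dft n x k) = of_nat n * x 0"
proof -
  have "(\<Sum>k<n. dft n x k) = (\<Sum>j<n. x j * (\<Sum>k<n. unity_root n ^ (j * k)))"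
    unfolding dft_def sum_distrib_left by (subst sum.swap) simp
  also have "\<dots> = (\<Sum>j<n. if j = 0 then x j * of_nat n else 0)"
    by (intro sum.cong refl) (auto simp: sum_unity_root_powers[OF assms] dest: dvd_imp_le)
  finally show ?thesis
    using assms by (simp add: sum.delta)
qed

section \<open>Spectra of Cayley graphs on \<open>\<int>\<^sub>n\<close>\<close>

definition cayley_indicator :: "nat \<Rightarrow> nat set \<Rightarrow> nat \<Rightarrow> 'a::zero_neq_one" where
  "cayley_indicator n S j = of_bool (\<exists>s\<in>S. int j mod int n = int s mod int n)"

lemma cayley_adj_dim [simp]:
  "dim_row (cayley_adj n S) = n" "dim_col (cayley_adj n S) = n" "cayley_adj n S \<in> carrier_mat n n"
  by (simp_all add: cayley_adj_def)

lemma cayley_adj_index: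
  assumes "i < n" "j < n"
  shows "cayley_adj n S $$ (i, j) = cayley_indicator n S ((j + n - i) mod n)"
proof -
  have "int ((j + n - i) mod n) = int (j + n - i) mod int n"
    by (simp add: zmod_int)
  also have "int (j + n - i) = (int j - int i) + int n"
    using assms by simp
  finally have "int ((j + n - i) mod n) mod int n = (int j - int i) mod int n"
    by simp
  then show ?thesis
    using assms by (simp add: cayley_adj_def cayley_indicator_def)
qed

definition cayley_eigenvalue :: "nat \<Rightarrow> nat set \<Rightarrow> nat \<Rightarrow> complex" where
  "cayley_eigenvalue n S = dft n (cayley_indicator n S)"

definition dft_mat :: "nat \<Rightarrow> complex mat" where
  "dft_mat n = mat n n (\<lambda>(i, j). unity_root n ^ (i * j))"

definition inverse_dft_mat :: "nat \<Rightarrow> complex mat" where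
  "inverse_dft_mat n = mat n n (\<lambda>(i, j). unity_root n ^ (i * j * (n - 1)) / of_nat n)"

lemma dvd_add_mult_diff_Suc_iff:
  fixes i k n :: nat
  assumes "i < n" "k < n"
  shows "n dvd i + k * (n - Suc 0) \<longleftrightarrow> i = k"
proof -
  obtain m where "n = Suc m"
    using assms by (cases n) auto
  then have "int (i + k * (n - Suc 0)) = int i - int k + int n * int k"
    by (simp add: algebra_simps)
  then have "n dvd i + k * (n - Suc 0) \<longleftrightarrow> int i mod int n = int k mod int n"
    by (metis dvd_add_left_iff dvd_triv_left int_dvd_int_iff mod_eq_dvd_iff)
  also have "\<dots> \<longleftrightarrow> i = k"
    using assms by simp
  finally show ?thesis .
qed

lemma dft_mat_inverse:
  assumes "n > 0"
  shows "dft_mat n * inverse_dft_mat n = 1\<^sub>m n"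
    and "inverse_dft_mat n * dft_mat n = 1\<^sub>m n"
proof -
  have "(\<Sum>j<n. unity_root n ^ (a * j) * (unity_root n ^ (j * b * (n - 1)) / of_nat n))
      = (if a = b then 1 else 0)" if "a < n" "b < n" for a b
  proof -
    have "(\<Sum>j<n. unity_root n ^ (a * j) * (unity_root n ^ (j * b * (n - 1)) / of_nat n))
        = (\<Sum>j<n. unity_root n ^ ((a + b * (n - 1)) * j)) / of_nat n"
      unfolding sum_divide_distrib
      by (intro sum.cong refl) (simp add: power_add[symmetric] algebra_simps)
    then show ?thesis
      using that assms by (simp add: sum_unity_root_powers dvd_add_mult_diff_Suc_iff)
  qed
  then show "dft_mat n * inverse_dft_mat n = 1\<^sub>m n" "inverse_dft_mat n * dft_mat n = 1\<^sub>m n"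
    by (auto intro!: eq_matI simp: dft_mat_def inverse_dft_mat_def scalar_prod_def
        lessThan_atLeast0 ac_simps)
qed

lemma cayley_adj_mult_dft_mat:
  "cayley_adj n S * dft_mat n = dft_mat n * mat_diag n (cayley_eigenvalue n S)"
proof (rule eq_matI)
  fix i k
  assume "i < dim_row (dft_mat n * mat_diag n (cayley_eigenvalue n S))"
    and "k < dim_col (dft_mat n * mat_diag n (cayley_eigenvalue n S))"
  then have i: "i < n" and k: "k < n"
    by (simp_all add: dft_mat_def mat_diag_def)
  have "(cayley_adj n S * dft_mat n) $$ (i, k) = (\<Sum>j<n. cayley_adj n S $$ (i, j) * dft_mat n $$ (j, k))"
    using i k by (simp add: dft_mat_def scalar_prod_def lessThan_atLeast0)
  also have "\<dots> = (\<Sum>j<n. cayley_indicator n S ((j + n - i) mod n) * unity_root n ^ (j * k))"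
    using i k by (intro sum.cong refl) (simp add: dft_mat_def cayley_adj_index)
  also have "\<dots> = (\<Sum>l<n. cayley_indicator n S l * unity_root n ^ ((l + i) * k))"
    using sum_lessThan_cyclic_shift[of i n "\<lambda>a b. cayley_indicator n S a * unity_root n ^ (b * k)"] i
    by (simp add: power_mult)
  also have "\<dots> = unity_root n ^ (i * k) * cayley_eigenvalue n S k"
    by (simp add: cayley_eigenvalue_def dft_def sum_distrib_left power_add algebra_simps)
  also have "\<dots> = (dft_mat n * mat_diag n (cayley_eigenvalue n S)) $$ (i, k)"
    using i k by (simp add: mat_diag_mult_right[of _ n n] dft_mat_def)
  finally show "(cayley_adj n S * dft_mat n) $$ (i, k) = \<dots>" .
qed (simp_all add: dft_mat_def mat_diag_def)

lemma proots_prod_list_linear_factors: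
  "proots (\<Prod>a\<leftarrow>xs. [:- a, 1:]) = mset (xs :: 'a::idom list)"
proof (induction xs)
  case (Cons a xs)
  have "[:- a, 1:] \<noteq> 0" "(\<Prod>a\<leftarrow>xs. [:- a, 1:]) \<noteq> 0"
    by (auto simp: prod_list_zero_iff)
  then show ?case
    using Cons.IH by (simp add: proots_mult del: mult_pCons_left)
qed simp

lemma Spec_similar_mat_diag:
  assumes "similar_mat A (mat_diag n f)"
  shows "Spec A = mset (map f [0..<n])"
proof -
  have "diag_mat (mat_diag n f) = map f [0..<n]"
    by (intro nth_equalityI) (simp_all add: mat_diag_def diag_mat_def)
  then have "char_poly A = (\<Prod>a\<leftarrow>map f [0..<n]. [:- a, 1:])"
    unfolding char_poly_similar[OF assms]
    by (subst char_poly_upper_triangular[of _ n]) (auto simp: mat_diag_def upper_triangular_def)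
  then show ?thesis
    unfolding Spec_def by (simp only: proots_prod_list_linear_factors)
qed

lemma Spec_cayley_adj:
  assumes "n > 0"
  shows "Spec (cayley_adj n S) = mset (map (cayley_eigenvalue n S) [0..<n])"
proof (rule Spec_similar_mat_diag, rule similar_matI)
  have "cayley_adj n S = cayley_adj n S * (dft_mat n * inverse_dft_mat n)"
    using dft_mat_inverse(1)[OF assms] by (simp add: right_mult_one_mat[of _ n n])
  also have "\<dots> = cayley_adj n S * dft_mat n * inverse_dft_mat n"
    by (simp add: assoc_mult_mat[of _ n n _ n _ n] dft_mat_def inverse_dft_mat_def)
  finally show "cayley_adj n S = dft_mat n * mat_diag n (cayley_eigenvalue n S) * inverse_dft_mat n"
    by (simp add: cayley_adj_mult_dft_mat)
qed (use dft_mat_inverse[OF assms] in \<open>auto simp: dft_mat_def inverse_dft_mat_def\<close>)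

lemma sum_mset_Spec_cayley_adj_power:
  assumes "n > 0"
    and "\<And>k. cayley_eigenvalue n S k ^ m = dft n x k"
  shows "(\<Sum>\<mu>\<in>#Spec (cayley_adj n S). \<mu> ^ m) = of_nat n * x 0"
proof -
  have "(\<Sum>\<mu>\<in>#Spec (cayley_adj n S). \<mu> ^ m) = (\<Sum>k<n. cayley_eigenvalue n S k ^ m)"
    by (simp add: Spec_cayley_adj[OF assms(1)] mset_map[symmetric] sum_mset_sum_list
        lessThan_atLeast0 sum_set_upt_conv_sum_list_nat[symmetric] del: mset_map)
  then show ?thesis
    by (simp add: assms(2) sum_dft[OF assms(1)])
qed

definition closed_walk_counts :: "nat \<Rightarrow> nat set \<Rightarrow> int \<times> int \<times> int" where
  "closed_walk_counts n S =
     (let a = cayley_indicator n S; b = cyclic_conv n a a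
      in (b 0, cyclic_conv n b a 0, cyclic_conv n b b 0))"

lemma of_int_cayley_indicator [simp]: "of_int (cayley_indicator n S j) = cayley_indicator n S j"
  by (simp add: cayley_indicator_def)

lemma closed_walk_counts_power_sums:
  fixes S :: "nat set"
  assumes "n > 0"
  defines "\<sigma> \<equiv> \<lambda>m. (\<Sum>\<mu>\<in>#Spec (cayley_adj n S). \<mu> ^ m) / of_nat n"
  shows "map_prod of_int (map_prod of_int of_int) (closed_walk_counts n S) = (\<sigma> 2, \<sigma> 3, \<sigma> 4)"
proof -
  let ?a = "cayley_indicator n S :: nat \<Rightarrow> complex"
  let ?b = "cyclic_conv n ?a ?a"
  have "cayley_eigenvalue n S k ^ 2 = dft n ?b k"
    and "cayley_eigenvalue n S k ^ 3 = dft n (cyclic_conv n ?b ?a) k"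
    and "cayley_eigenvalue n S k ^ 4 = dft n (cyclic_conv n ?b ?b) k" for k
    by (simp_all add: cayley_eigenvalue_def dft_cyclic_conv eval_nat_numeral)
  then have "\<sigma> 2 = ?b 0" "\<sigma> 3 = cyclic_conv n ?b ?a 0" "\<sigma> 4 = cyclic_conv n ?b ?b 0"
    using assms(1) by (simp_all add: \<sigma>_def sum_mset_Spec_cayley_adj_power)
  then show ?thesis
    by (simp add: closed_walk_counts_def Let_def of_int_cyclic_conv)
qed

lemma cospectral_closed_walk_counts:
  assumes "n > 0"
    and "Spec (cayley_adj n S) = Spec (cayley_adj n S')"
  shows "closed_walk_counts n S = closed_walk_counts n S'"
proof -
  have "map_prod of_int (map_prod of_int of_int) (closed_walk_counts n S)
      = (map_prod of_int (map_prod of_int of_int) (closed_walk_counts n S') :: complex \<times> complex \<times> complex)"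
    unfolding closed_walk_counts_power_sums[OF assms(1)] assms(2) by (rule refl)
  then show ?thesis
    by (auto simp: prod_eq_iff)
qed

section \<open>Evaluating closed walk counts\<close>

lemma sum_list_map2_times:
  "length xs = length ys \<Longrightarrow> sum_list (map2 (*) xs ys) = (\<Sum>j<length xs. xs ! j * ys ! j)"
  by (simp add: sum_list_sum_nth lessThan_atLeast0)

lemma reflected_rotation_index:
  fixes j t n :: nat
  assumes "j < n" "t < n"
  shows "n - Suc ((n + j - Suc t) mod n) = (t + n - j) mod n"
  using assms by (cases "j \<le> t") (auto simp: mod_if)

text \<open>\<open>rotations xs ! k = rotate k xs\<close>, spelled out with \<open>drop\<close> and \<open>take\<close> because \<open>code_simp\<close>
  evaluates \<open>rotate k\<close> as \<open>k\<close> single-step rotations.\<close>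

definition rotations :: "'a list \<Rightarrow> 'a list list" where
  "rotations xs = map (\<lambda>k. drop k xs @ take k xs) [0..<length xs]"

definition cyclic_conv_at :: "'a::comm_semiring_0 list \<Rightarrow> 'a list \<Rightarrow> nat \<Rightarrow> 'a" where
  "cyclic_conv_at xs ys t = sum_list (map2 (*) xs (rotate (length ys - Suc t) (rev ys)))"

definition cyclic_conv_list :: "'a::comm_semiring_0 list \<Rightarrow> 'a list \<Rightarrow> 'a list" where
  "cyclic_conv_list xs ys = rev (map (\<lambda>r. sum_list (map2 (*) xs r)) (rotations (rev ys)))"

lemma cyclic_conv_at_eq:
  assumes "length xs = n" "length ys = n" "t < n"
  shows "cyclic_conv_at xs ys t = cyclic_conv n (nth xs) (nth ys) t"
proof -
  have "rotate (n - Suc t) (rev ys) ! j = ys ! ((t + n - j) mod n)" if "j < n" for j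
    using that assms by (simp add: nth_rotate rev_nth reflected_rotation_index)
  then show ?thesis
    using assms by (simp add: cyclic_conv_at_def cyclic_conv_def sum_list_map2_times)
qed

lemma length_cyclic_conv_list [simp]: "length (cyclic_conv_list xs ys) = length ys"
  by (simp add: cyclic_conv_list_def rotations_def)

lemma nth_cyclic_conv_list:
  "t < length ys \<Longrightarrow> cyclic_conv_list xs ys ! t = cyclic_conv_at xs ys t"
  by (simp add: cyclic_conv_list_def cyclic_conv_at_def rev_nth rotations_def rotate_drop_take)

definition closed_walk_counts_list :: "int list \<Rightarrow> int \<times> int \<times> int" where
  "closed_walk_counts_list a =
     (let b = cyclic_conv_list a a in (hd b, cyclic_conv_at b a 0, cyclic_conv_at b b 0))"

lemma closed_walk_counts_eq_list:
  assumes "n > 0"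
  shows "closed_walk_counts n S = closed_walk_counts_list (map (cayley_indicator n S) [0..<n])"
proof -
  let ?a = "cayley_indicator n S :: nat \<Rightarrow> int"
  let ?as = "map ?a [0..<n]"
  let ?bs = "cyclic_conv_list ?as ?as"
  have a: "?as ! j = ?a j" if "j < n" for j
    using that by simp
  have b: "?bs ! t = cyclic_conv n ?a ?a t" if "t < n" for t
    using that by (simp add: nth_cyclic_conv_list cyclic_conv_at_eq a cong: cyclic_conv_cong)
  have "?bs \<noteq> []"
    using assms by (simp flip: length_greater_0_conv)
  then have "hd ?bs = ?bs ! 0"
    by (rule hd_conv_nth)
  then show ?thesis
    using assms
    by (simp add: closed_walk_counts_def closed_walk_counts_list_def Let_def
        cyclic_conv_at_eq a b cong: cyclic_conv_cong)
qed

section \<open>Integral circulant graphs\<close>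

lemma cayley_indicator_conn_set:
  assumes "j < n" "n \<notin> D"
  shows "cayley_indicator n (conn_set n D) j = of_bool (gcd j n \<in> D)"
proof -
  have "(\<exists>s\<in>conn_set n D. int j mod int n = int s mod int n) \<longleftrightarrow> gcd j n \<in> D"
  proof
    assume "\<exists>s\<in>conn_set n D. int j mod int n = int s mod int n"
    then obtain s where s: "s \<in> {1..n}" "gcd s n \<in> D" "int j mod int n = int s mod int n"
      by (auto simp: conn_set_def Gn_def)
    with assms have "s < n"
      by (cases "s = n") auto
    with s assms show "gcd j n \<in> D"
      by simp
  next
    assume "gcd j n \<in> D"
    with assms have "j \<in> conn_set n D"
      by (cases "j = 0") (auto simp: conn_set_def Gn_def)
    then show "\<exists>s\<in>conn_set n D. int j mod int n = int s mod int n"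
      by blast
  qed
  then show ?thesis
    by (simp add: cayley_indicator_def)
qed

text \<open>\<open>G\<close> is the list of classes \<open>gcd j n\<close>, \<open>j < n\<close>. As a separate argument it is evaluated
  only once when \<open>code_simp\<close> maps \<open>class_walk_counts G\<close> over many divisor lists.\<close>

definition class_walk_counts :: "nat list \<Rightarrow> nat list \<Rightarrow> int \<times> int \<times> int" where
  "class_walk_counts G L = closed_walk_counts_list (map (\<lambda>g. of_bool (g \<in> set L)) G)"

lemma closed_walk_counts_ICG:
  assumes "n > 0" "n \<notin> set L"
  shows "closed_walk_counts n (conn_set n (set L)) = class_walk_counts (map (\<lambda>j. gcd j n) [0..<n]) L"
proof -
  have "map (cayley_indicator n (conn_set n (set L))) [0..<n]
      = map (\<lambda>g. of_bool (g \<in> set L)) (map (\<lambda>j. gcd j n) [0..<n])"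
    using assms(2) by (simp add: cayley_indicator_conn_set)
  then show ?thesis
    unfolding closed_walk_counts_eq_list[OF assms(1)] class_walk_counts_def by (rule arg_cong)
qed

lemma divisors_of_36: "divisors_of 36 = {1, 2, 3, 4, 6, 9, 12, 18, 36}"
proof -
  have "divisors_of 36 = set (filter (\<lambda>d. d dvd 36) [1..<37])"
    by (auto simp: divisors_of_def dest: dvd_imp_le)
  also have "\<dots> = {1, 2, 3, 4, 6, 9, 12, 18, 36}"
    by code_simp
  finally show ?thesis .
qed

lemma image_set_Cons_subseqs: "(\<lambda>L. set (a # L)) ` set (subseqs xs) = insert a ` Pow (set xs)"
  by (simp add: image_image flip: subseqs_powset)

lemma ICG_36_divisor_sets:
  "{D. D \<subseteq> divisors_of 36 - {36} \<and> 12 \<in> D} = (\<lambda>L. set (12 # L)) ` set (subseqs [1, 2, 3, 4, 6, 9, 18])"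
  unfolding image_set_Cons_subseqs
proof (intro equalityI subsetI)
  fix D
  assume "D \<in> {D. D \<subseteq> divisors_of 36 - {36} \<and> 12 \<in> D}"
  then have "D = insert 12 (D - {12})" "D - {12} \<in> Pow (set [1, 2, 3, 4, 6, 9, 18])"
    by (auto simp: divisors_of_36)
  then show "D \<in> insert 12 ` Pow (set [1, 2, 3, 4, 6, 9, 18])"
    by blast
qed (auto simp: divisors_of_36)

lemma inj_on_closed_walk_counts_ICG_36:
  "inj_on (\<lambda>D. closed_walk_counts 36 (conn_set 36 D)) {D. D \<subseteq> divisors_of 36 - {36} \<and> 12 \<in> D}"
proof -
  define ds :: "nat list" where "ds = [1, 2, 3, 4, 6, 9, 18]"
  define G where "G = map (\<lambda>j. gcd j 36) [0..<36]"
  have "distinct (map (class_walk_counts G) (map ((#) 12) (subseqs ds)))"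
    unfolding G_def ds_def by code_simp
  then have "inj_on (\<lambda>L. class_walk_counts G (12 # L)) (set (subseqs ds))"
    by (simp add: distinct_map comp_def)
  moreover have "closed_walk_counts 36 (conn_set 36 (set (12 # L))) = class_walk_counts G (12 # L)"
    if "L \<in> set (subseqs ds)" for L
  proof -
    have "set L \<subseteq> set ds"
      using that subseqs_powset[of ds] by blast
    then have "36 \<notin> set (12 # L)"
      by (auto simp: ds_def)
    then show ?thesis
      unfolding G_def by (intro closed_walk_counts_ICG) simp_all
  qed
  ultimately have "inj_on (\<lambda>L. closed_walk_counts 36 (conn_set 36 (set (12 # L)))) (set (subseqs ds))"
    by (simp cong: inj_on_cong)
  then show ?thesis
    unfolding ICG_36_divisor_sets ds_def[symmetric] by (intro inj_on_imageI) (simp add: comp_def)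
qed

theorem lemma3p23:
  fixes D1 D2 :: "nat set"
  assumes "D1 \<subseteq> divisors_of 36 - {36}"
    and "D2 \<subseteq> divisors_of 36 - {36}"
    and "12 \<in> D1 \<inter> D2"
    and "Spec (ICG_adj 36 D1) = Spec (ICG_adj 36 D2)"
  shows "D1 = D2"
proof -
  have "closed_walk_counts 36 (conn_set 36 D1) = closed_walk_counts 36 (conn_set 36 D2)"
    using assms(4) unfolding ICG_adj_def by (intro cospectral_closed_walk_counts) simp_all
  then show ?thesis
    using inj_on_closed_walk_counts_ICG_36 assms(1-3) by (auto dest: inj_onD)
qed

end
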